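(* Let $p=2^{\ell}\pm1$ be a prime with $\ell\ge1$, and let $n\ge k+2$, $k\ge 2$, $\mathfrak{a}\ge1$ be integers with $L_n^{(k)}=(p+1)p^{\mathfrak{a}}-1$ and $p>n^{10}$. Then $2^{k-1}<10n^2$; in particular $k<10\log n$.
   Context: The $k$-Lucas sequence is defined by $L_{2-k}^{(k)}=\cdots=L_{-1}^{(k)}=0$, $L_0^{(k)}=2$, $L_1^{(k)}=1$, $L_n^{(k)}=L_{n-1}^{(k)}+\cdots+L_{n-k}^{(k)}$. $\log$ denotes the natural logarithm. *)

theory Defs
  imports Complex_Main "HOL-Computational_Algebra.Primes"
begin

text \<open>k-Lucas sequence: L 0 = 2, L 1 = 1, and for n >= 2,
  L n = L (n-1) + ... + L (n-k), where terms with negative index are 0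
  (the initial values L_{2-k} = ... = L_{-1} = 0).\<close>
fun kLucas :: "nat \<Rightarrow> nat \<Rightarrow> nat" where
  "kLucas k n = (if n = 0 then 2 else if n = 1 then 1
     else (\<Sum>j\<in>{1..min k n}. kLucas k (n - j)))"

end

theory Submission
  imports Defs
begin

text \<open>If \<open>2 ^ k\<close> is large compared with \<open>n\<close>, the recurrence
  \<open>L (n + 1) = 2 L n - L (n - k)\<close> keeps \<open>L n\<close> between \<open>29/10 \<cdot> 2 ^ (n - 2)\<close> and
  \<open>3 \<cdot> 2 ^ (n - 2)\<close>, i.e. roughly halfway between two consecutive powers of two.
  On the other hand \<open>(p + 1) p ^ a\<close> with \<open>p = 2 ^ l \<plusminus> 1\<close> and \<open>p\<close> large compared with
  \<open>a\<close> is within two percent of \<open>2 ^ (l (a + 1))\<close>; the hypothesis \<open>p > n ^ 10\<close>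
  guarantees this, since \<open>2 ^ a \<le> L n + 1 \<le> 2 ^ n\<close>. So \<open>L n + 1 = (p + 1) p ^ a\<close>
  forces \<open>2 ^ (k - 1) < 10 n\<^sup>2\<close>, and the logarithmic bound follows.\<close>

declare kLucas.simps[simp del]

lemma kLucas_0 [simp]: "kLucas k 0 = 2"
  and kLucas_1 [simp]: "kLucas k (Suc 0) = 1"
  by (simp_all add: kLucas.simps)

lemma kLucas_unfold:
  "n \<ge> 2 \<Longrightarrow> kLucas k n = (\<Sum>j\<in>{1..min k n}. kLucas k (n - j))"
  by (subst kLucas.simps) simp

lemma kLucas_recurrence:
  assumes "k \<ge> 1" "n \<ge> 2"
  shows "kLucas k (Suc n) + (if k \<le> n then kLucas k (n - k) else 0) = 2 * kLucas k n"
proof -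
  have shifted: "kLucas k n = (\<Sum>j\<in>{2..Suc (min k n)}. kLucas k (Suc n - j))"
    unfolding kLucas_unfold[OF assms(2)] numeral_2_eq_2 sum.shift_bounds_cl_Suc_ivl by simp
  have step: "kLucas k (Suc n) = kLucas k n + (\<Sum>j\<in>{2..min k (Suc n)}. kLucas k (Suc n - j))"
    using assms by (simp add: kLucas_unfold[of "Suc n"] sum.atLeast_Suc_atMost numeral_2_eq_2)
  show ?thesis
  proof (cases "k \<le> n")
    case True
    then have "min k (Suc n) = k" "min k n = k" by auto
    then show ?thesis using shifted step True assms by (simp add: Suc_diff_le)
  next
    case False
    then have "min k (Suc n) = Suc n" "min k n = n" by auto
    then show ?thesis using shifted step False by simp
  qed
qed

lemma kLucas_2:
  assumes "k \<ge> 2"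
  shows "kLucas k 2 = 3"
proof -
  have "{1..min k 2} = {1, 2::nat}" using assms by auto
  then show ?thesis by (simp add: kLucas_unfold)
qed

lemma kLucas_le:
  assumes "k \<ge> 2"
  shows "kLucas k (m + 2) \<le> 3 * 2 ^ m"
proof (induction m)
  case 0
  then show ?case using kLucas_2[OF assms] by (simp add: numeral_2_eq_2)
next
  case (Suc m)
  have "kLucas k (Suc m + 2) \<le> 2 * kLucas k (m + 2)"
    using kLucas_recurrence[of k "m + 2"] assms by simp
  then show ?case using Suc.IH by simp
qed

lemma kLucas_le_pow2:
  assumes "k \<ge> 2"
  shows "kLucas k n \<le> 2 ^ Suc n"
proof (cases "n \<ge> 2")
  case True
  then obtain m where n: "n = m + 2" using add.commute le_Suc_ex by blast
  show ?thesis using kLucas_le[OF assms, of m] unfolding n by simp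
next
  case False
  then have "n = 0 \<or> n = 1" by auto
  then show ?thesis by auto
qed

lemma kLucas_lower_bound:
  assumes "k \<ge> 2"
  shows "3 * 2 ^ m * 2 ^ k \<le> 2 ^ k * kLucas k (m + 2) + 8 * m * 2 ^ m"
proof (induction m)
  case 0
  then show ?case using kLucas_2[OF assms] by (simp add: numeral_2_eq_2)
next
  case (Suc m)
  define E where "E = (if k \<le> m + 2 then kLucas k (m + 2 - k) else 0)"
  have rec: "kLucas k (Suc m + 2) + E = 2 * kLucas k (m + 2)"
    using kLucas_recurrence[of k "m + 2"] assms unfolding E_def by simp
  have E: "2 ^ k * E \<le> 8 * 2 ^ m"
  proof (cases "k \<le> m + 2")
    case True
    then have "2 ^ k * E \<le> 2 ^ k * 2 ^ Suc (m + 2 - k)"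
      using kLucas_le_pow2[OF assms, of "m + 2 - k"] by (simp add: E_def)
    also have "\<dots> = 2 ^ (k + Suc (m + 2 - k))" by (rule power_add[symmetric])
    also have "\<dots> = 8 * 2 ^ m" using True by (simp add: power_add)
    finally show ?thesis .
  qed (simp add: E_def)
  have "(3::nat) * 2 ^ Suc m * 2 ^ k = 2 * (3 * 2 ^ m * 2 ^ k)" by simp
  also have "\<dots> \<le> 2 * (2 ^ k * kLucas k (m + 2) + 8 * m * 2 ^ m)"
    using Suc.IH by simp
  also have "\<dots> = 2 ^ k * kLucas k (Suc m + 2) + 2 ^ k * E + 16 * m * 2 ^ m"
  proof -
    have "2 * (2 ^ k * kLucas k (m + 2)) = 2 ^ k * (kLucas k (Suc m + 2) + E)"
      using rec by simp
    then show ?thesis by (simp only: distrib_left)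
  qed
  also have "\<dots> \<le> 2 ^ k * kLucas k (Suc m + 2) + 16 * 2 ^ m + 16 * m * 2 ^ m"
    using E by simp
  also have "\<dots> = 2 ^ k * kLucas k (Suc m + 2) + 8 * Suc m * 2 ^ Suc m"
    by (simp add: algebra_simps)
  finally show ?case .
qed

lemma kLucas_ge_29_tenths:
  assumes "k \<ge> 2" "80 * m \<le> 2 ^ k"
  shows "29 * 2 ^ m \<le> 10 * kLucas k (m + 2)"
proof -
  have "2 ^ k * (30 * 2 ^ m) \<le> 2 ^ k * (10 * kLucas k (m + 2)) + 80 * m * 2 ^ m"
    using kLucas_lower_bound[OF assms(1), of m] by (simp add: algebra_simps)
  also have "\<dots> \<le> 2 ^ k * (10 * kLucas k (m + 2)) + 2 ^ k * 2 ^ m"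
    using assms(2) by simp
  finally have "2 ^ k * (29 * 2 ^ m) \<le> 2 ^ k * (10 * kLucas k (m + 2))"
    by (simp add: algebra_simps)
  then show ?thesis by simp
qed

lemma one_plus_power_le:
  fixes x :: real
  assumes "0 \<le> x" "m * x \<le> 1/2"
  shows "(1 + x) ^ m \<le> 1 + 2 * m * x"
proof -
  have "(1 + x) ^ m \<le> exp x ^ m"
    using assms(1) by (intro power_mono) auto
  also have "\<dots> = exp (m * x)" by (simp add: exp_of_nat_mult)
  also have "\<dots> \<le> 1 + 2 * (m * x)"
    using exp_bound_lemma[of "m * x"] assms by simp
  finally show ?thesis by simp
qed

lemma pow2_plus_one_power_bounds:
  assumes "p = 2 ^ l + 1" "100 * (a + 2) < p"
  shows "2 ^ (l * (a + 1)) \<le> real ((p + 1) * p ^ a)"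
    and "real ((p + 1) * p ^ a) \<le> 51/50 * 2 ^ (l * (a + 1))"
proof -
  define P :: real where "P = 2 ^ l"
  define x where "x = 1 / P"
  have P: "P \<ge> 1" "real p = P + 1" "2 ^ (l * (a + 1)) = P ^ (a + 1)"
    using assms(1) unfolding P_def power_mult by simp_all
  have x: "0 \<le> x" "(a + 2) * x \<le> 1/100"
    using assms(2) P by (simp_all add: x_def field_simps)
  have N: "real ((p + 1) * p ^ a) = P ^ (a + 1) * ((1 + 2 * x) * (1 + x) ^ a)"
    using P by (simp add: x_def field_simps)
  have "1 \<le> (1 + 2 * x) * (1 + x) ^ a"
    using mult_mono[of 1 "1 + 2 * x" 1 "(1 + x) ^ a"] x(1) by simp
  then show "2 ^ (l * (a + 1)) \<le> real ((p + 1) * p ^ a)"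
    unfolding N P(3) using P(1) by simp
  have "(1 + 2 * x) * (1 + x) ^ a \<le> (1 + x) ^ (a + 2)"
    using x(1) by (simp add: power2_eq_square mult_right_mono algebra_simps)
  also have "\<dots> \<le> 1 + 2 * (a + 2) * x"
    using one_plus_power_le[of x "a + 2"] x by simp
  also have "\<dots> \<le> 51/50" using x(2) by (simp add: algebra_simps)
  finally show "real ((p + 1) * p ^ a) \<le> 51/50 * 2 ^ (l * (a + 1))"
    unfolding N P(3) using P(1) by simp
qed

lemma pow2_minus_one_power_bounds:
  assumes "p = 2 ^ l - 1" "100 * a < p"
  shows "99/100 * 2 ^ (l * (a + 1)) \<le> real ((p + 1) * p ^ a)"
    and "real ((p + 1) * p ^ a) \<le> 2 ^ (l * (a + 1))"
proof -
  define P :: real where "P = 2 ^ l"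
  define x where "x = 1 / P"
  have P: "P \<ge> 1" "real p = P - 1" "2 ^ (l * (a + 1)) = P ^ (a + 1)"
    using assms(1) unfolding P_def power_mult by simp_all
  have x: "x \<le> 1" "a * x \<le> 1/100"
    using assms(2) P by (simp_all add: x_def field_simps)
  have "real ((p + 1) * p ^ a) = (real p + 1) * real p ^ a" by (simp add: algebra_simps)
  also have "\<dots> = P * (P - 1) ^ a" unfolding P(2) by simp
  also have "P - 1 = P * (1 - x)" using P(1) by (simp add: x_def field_simps)
  finally have N: "real ((p + 1) * p ^ a) = P ^ (a + 1) * (1 - x) ^ a"
    by (simp add: power_mult_distrib)
  have "99/100 \<le> (1 - x) ^ a"
    using Bernoulli_inequality[of "- x" a] x by simp
  then show "99/100 * 2 ^ (l * (a + 1)) \<le> real ((p + 1) * p ^ a)"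
    unfolding N P(3) using P(1) by simp
  have "(1 - x) ^ a \<le> 1"
    using x(1) P(1) by (intro power_le_one) (auto simp: x_def)
  then show "real ((p + 1) * p ^ a) \<le> 2 ^ (l * (a + 1))"
    unfolding N P(3) using P(1) by simp
qed

lemma shifted_power_near_pow2:
  assumes "p = 2 ^ l + 1 \<or> p = 2 ^ l - 1" "100 * (a + 2) < p"
  shows "99/100 * 2 ^ (l * (a + 1)) \<le> real ((p + 1) * p ^ a)
    \<and> real ((p + 1) * p ^ a) \<le> 51/50 * 2 ^ (l * (a + 1))"
  using assms(1)
proof
  assume "p = 2 ^ l + 1"
  with pow2_plus_one_power_bounds[of p l a] assms(2) show ?thesis by simp
next
  assume "p = 2 ^ l - 1"
  with pow2_minus_one_power_bounds[of p l a] assms(2) show ?thesis by simp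
qed

lemma not_near_pow2:
  fixes N :: real
  assumes "29 * 2 ^ m < 10 * N" "N \<le> 3 * 2 ^ m + 1" "m \<ge> 1"
  shows "\<not> (99/100 * 2 ^ M \<le> N \<and> N \<le> 51/50 * 2 ^ M)"
proof -
  have "(2::real) ^ m \<ge> 2" using power_increasing[OF assms(3), of "2::real"] by simp
  consider "M \<ge> m + 2" | "M \<le> m + 1" by linarith
  then show ?thesis
  proof cases
    case 1
    then have "4 * 2 ^ m \<le> (2::real) ^ M"
      using power_increasing[OF 1, of "2::real"] by (simp add: power_add)
    then show ?thesis using assms \<open>2 ^ m \<ge> 2\<close> by linarith
  next
    case 2
    then have "(2::real) ^ M \<le> 2 * 2 ^ m"
      using power_increasing[OF 2, of "2::real"] by simp
    then show ?thesis using assms by linarith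
  qed
qed

text \<open>The hypothesis \<open>m \<ge> 1\<close> is needed: \<open>kLucas k 2 + 1 = 4\<close>.\<close>

lemma kLucas_plus_one_not_near_pow2:
  assumes "k \<ge> 2" "m \<ge> 1" "80 * m \<le> 2 ^ k"
  shows "\<not> (99/100 * 2 ^ M \<le> real (kLucas k (m + 2) + 1)
    \<and> real (kLucas k (m + 2) + 1) \<le> 51/50 * 2 ^ M)"
proof (rule not_near_pow2[OF _ _ assms(2)])
  have "real (29 * 2 ^ m) \<le> real (10 * kLucas k (m + 2))"
    using kLucas_ge_29_tenths[OF assms(1,3)] by (rule of_nat_mono)
  then show "29 * 2 ^ m < 10 * real (kLucas k (m + 2) + 1)" by simp
  have "real (kLucas k (m + 2)) \<le> real (3 * 2 ^ m)"
    using kLucas_le[OF assms(1)] by (rule of_nat_mono)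
  then show "real (kLucas k (m + 2) + 1) \<le> 3 * 2 ^ m + 1" by simp
qed

lemma lt_10_ln_if_pow2_lt:
  assumes "n \<ge> 4" "2 ^ (k - 1) < 10 * n ^ 2"
  shows "real k < 10 * ln (real n)"
proof -
  have "10 * n ^ 2 \<le> n ^ 2 * n ^ 2"
    using mult_le_mono[OF assms(1) assms(1)] by (simp add: power2_eq_square)
  then have "(2::nat) ^ (k - 1) < n ^ 4" using assms(2) by (simp flip: power_add)
  then have "(2::real) ^ (k - 1) < real n ^ 4" by (metis of_nat_less_iff of_nat_numeral of_nat_power)
  then have "ln ((2::real) ^ (k - 1)) < ln (real n ^ 4)" using assms(1) by simp
  then have k: "real (k - 1) * ln 2 < 4 * ln (real n)" by (simp add: ln_realpow)
  have ln2: "ln (2::real) \<ge> 1/2"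
    using ln_le_minus_one[of "1/2::real"] by (simp add: ln_div)
  have "ln (real n) \<ge> ln 4" using assms(1) by simp
  moreover have "ln (4::real) = 2 * ln 2" using ln_realpow[of 2 2] by simp
  ultimately have "ln (real n) \<ge> 1" using ln2 by linarith
  moreover have "real (k - 1) * (1/2) \<le> real (k - 1) * ln 2"
    using ln2 by (intro mult_left_mono) auto
  ultimately show ?thesis using k by linarith
qed

lemma exponent_le_index:
  assumes "k \<ge> 2" "p \<ge> 2" "kLucas k (m + 2) + 1 = (p + 1) * p ^ a"
  shows "a \<le> m + 2"
proof -
  have "2 ^ a \<le> (p + 1) * p ^ a"
    using power_mono[of 2 p a] assms(2) by (simp add: trans_le_add2)
  also have "\<dots> = kLucas k (m + 2) + 1" using assms(3) by simp
  also have "\<dots> \<le> 3 * 2 ^ m + 2 ^ m"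
    using kLucas_le[OF assms(1), of m] zero_less_power[of "2::nat" m] by linarith
  also have "\<dots> = 2 ^ (m + 2)" by simp
  finally show ?thesis by (rule power_le_imp_le_exp[of "2::nat", rotated]) simp
qed

lemma hundred_mul_add_two_le_pow10:
  fixes n :: nat
  assumes "n \<ge> 4"
  shows "100 * (n + 2) \<le> n ^ 10"
proof -
  have "100 * (n + 2) \<le> 4 ^ 9 * n" using assms by simp
  also have "\<dots> \<le> n ^ 9 * n" using power_mono[OF assms, of 9] by simp
  also have "\<dots> = n ^ 10" by (simp flip: power_Suc2)
  finally show ?thesis .
qed

theorem mainTheorem12:
  fixes p l n k a :: nat
  assumes "prime p"
    and "l \<ge> 1"
    and "p = 2 ^ l + 1 \<or> p = 2 ^ l - 1"
    and "k \<ge> 2" and "n \<ge> k + 2" and "a \<ge> 1"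
    and "kLucas k n = (p + 1) * p ^ a - 1"
    and "p > n ^ 10"
  shows "2 ^ (k - 1) < 10 * n ^ 2 \<and> real k < 10 * ln (real n)"
proof
  have n4: "n \<ge> 4" using assms(4,5) by simp
  define m where "m = n - 2"
  have n: "n = m + 2" "m \<ge> 1" using n4 by (simp_all add: m_def)
  show small: "2 ^ (k - 1) < 10 * n ^ 2"
  proof (rule ccontr)
    assume "\<not> 2 ^ (k - 1) < 10 * n ^ 2"
    then have "20 * n ^ 2 \<le> 2 ^ k" using assms(4) by (cases k) auto
    then have k: "80 * m \<le> 2 ^ k" using n4 by (simp add: n power2_eq_square)
    have p2: "p \<ge> 2" using assms(1) prime_ge_2_nat by blast
    then have "(p + 1) * p ^ a > 0" by simp
    then have N: "kLucas k (m + 2) + 1 = (p + 1) * p ^ a"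
      using assms(7) unfolding n(1) by linarith
    have "100 * (a + 2) \<le> 100 * (n + 2)"
      using exponent_le_index[OF assms(4) p2 N] n(1) by simp
    also have "\<dots> < p" using hundred_mul_add_two_le_pow10[OF n4] assms(8) by simp
    finally have "100 * (a + 2) < p" .
    then show False
      using shifted_power_near_pow2[OF assms(3)]
        kLucas_plus_one_not_near_pow2[OF assms(4) n(2) k, of "l * (a + 1)"]
      unfolding N by simp
  qed
  show "real k < 10 * ln (real n)" using lt_10_ln_if_pow2_lt[OF n4 small] .
qed

end
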